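(* Let $R$ be $\mathbb{Z}$ or $\mathbb{Z}/m\mathbb{Z}$ with $m\ge2$, let $\Lambda$ be a free abelian group with basis $x_1,\ldots,x_n$, and let $\vec q=(q_1,\ldots,q_n)$ be an $n$-tuple in $R[\Lambda]$ satisfying the generalized flatness condition. Then every syzygy of $\vec q$ is trivial.
   Context: $R[\Lambda]$ is identified with $R[x_1^{\pm1},\ldots,x_n^{\pm1}]$; $\Lambda_i=\langle x_1,\ldots,x_i\rangle$. A polynomial $p\in R[\Lambda_i]$ is a divisor with respect to $x_i$ if, writing $p=p_kx_i^k+\cdots+p_mx_i^m$ with $p_j\in R[\Lambda_{i-1}]$ and $p_k\ne0$, $p_k$ is a monic monomial in $x_1,\ldots,x_{i-1}$. $(r_1,\ldots,r_n)$ satisfies the flatness condition if $r_i\in R[\Lambda_i]$ and $r_i$ is a divisor with respect to $x_i$ for all $i$; $\vec q$ satisfies the generalized flatness condition if $\vec qA$ satisfies the flatness condition for some $A\in GL_n(R[\Lambda])$. A syzygy of $\vec q$ is $(f_1,\ldots,f_n)\in R[\Lambda]^n$ with $\sum_if_iq_i=0$; it is trivial if it lies in the $R[\Lambda]$-submodule generated by the vectors $S_{ij}$ ($i\ne j$) having $q_j$ in position $i$, $-q_i$ in position $j$, and $0$ elsewhere. *)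

theory Defs
  imports Main "HOL-Library.Poly_Mapping"
begin

text \<open>The group ring R[Lambda] of the free abelian group Lambda = Z^n is modelled
as finitely supported functions from exponent vectors (nat =>0 int) to R.
Variable x_(j+1) of the paper corresponds to index j (0-based). An element lies in
R[Lambda_i] (i.e. involves only x_1,...,x_i) iff all exponent vectors of its support
only use indices < i.\<close>

type_synonym 'a laurent = "(nat \<Rightarrow>\<^sub>0 int) \<Rightarrow>\<^sub>0 'a"

definition in_LR :: "nat \<Rightarrow> ('a::zero) laurent \<Rightarrow> bool" where
  "in_LR i p \<longleftrightarrow> (\<forall>e \<in> Poly_Mapping.keys p. Poly_Mapping.keys e \<subseteq> {..<i})"

text \<open>Coefficient of x_j^k: the Laurent polynomial p_k (not involving variable j)
with p = sum_k p_k x_j^k.\<close>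
definition coeff_slice :: "('a::zero) laurent \<Rightarrow> nat \<Rightarrow> int \<Rightarrow> 'a laurent" where
  "coeff_slice p j k = Abs_poly_mapping
     (\<lambda>e. if Poly_Mapping.lookup e j = 0 then Poly_Mapping.lookup p (e + Poly_Mapping.single j k) else 0)"

definition low_deg :: "('a::zero) laurent \<Rightarrow> nat \<Rightarrow> int" where
  "low_deg p j = Min ((\<lambda>e. Poly_Mapping.lookup e j) ` Poly_Mapping.keys p)"

text \<open>p in R[Lambda_(j+1)] is a divisor with respect to x_(j+1) (index j):
the lowest coefficient p_k is nonzero and a monic monomial in x_1..x_j (indices < j).\<close>
definition divisor_wrt :: "nat \<Rightarrow> ('a::{zero,one}) laurent \<Rightarrow> bool" where
  "divisor_wrt j p \<longleftrightarrow> in_LR (Suc j) p \<and> p \<noteq> 0 \<and>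
     (\<exists>e. Poly_Mapping.keys e \<subseteq> {..<j} \<and> coeff_slice p j (low_deg p j) = Poly_Mapping.single e 1)"

definition flatness :: "nat \<Rightarrow> (nat \<Rightarrow> ('a::{zero,one}) laurent) \<Rightarrow> bool" where
  "flatness n r \<longleftrightarrow> (\<forall>j<n. in_LR (Suc j) (r j) \<and> divisor_wrt j (r j))"

definition vec_mat :: "nat \<Rightarrow> (nat \<Rightarrow> ('a::comm_ring_1) laurent) \<Rightarrow> (nat \<Rightarrow> nat \<Rightarrow> 'a laurent)
     \<Rightarrow> nat \<Rightarrow> 'a laurent" where
  "vec_mat n q A = (\<lambda>j. \<Sum>i<n. q i * A i j)"

definition is_GL :: "nat \<Rightarrow> (nat \<Rightarrow> nat \<Rightarrow> ('a::comm_ring_1) laurent) \<Rightarrow> bool" where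
  "is_GL n A \<longleftrightarrow> (\<forall>i<n. \<forall>j<n. in_LR n (A i j)) \<and>
     (\<exists>B. (\<forall>i<n. \<forall>j<n. in_LR n (B i j)) \<and>
          (\<forall>i<n. \<forall>j<n. (\<Sum>k<n. A i k * B k j) = (if i = j then 1 else 0)) \<and>
          (\<forall>i<n. \<forall>j<n. (\<Sum>k<n. B i k * A k j) = (if i = j then 1 else 0)))"

definition gen_flatness :: "nat \<Rightarrow> (nat \<Rightarrow> ('a::comm_ring_1) laurent) \<Rightarrow> bool" where
  "gen_flatness n q \<longleftrightarrow> (\<exists>A. is_GL n A \<and> flatness n (vec_mat n q A))"

definition syzygy :: "nat \<Rightarrow> (nat \<Rightarrow> ('a::comm_ring_1) laurent) \<Rightarrow> (nat \<Rightarrow> 'a laurent) \<Rightarrow> bool" where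
  "syzygy n q f \<longleftrightarrow> (\<forall>i<n. in_LR n (f i)) \<and> (\<Sum>i<n. f i * q i) = 0"

definition S_vec :: "(nat \<Rightarrow> ('a::comm_ring_1) laurent) \<Rightarrow> nat \<Rightarrow> nat \<Rightarrow> nat \<Rightarrow> 'a laurent" where
  "S_vec q i j = (\<lambda>k. if k = i then q j else if k = j then - q i else 0)"

definition trivial_syzygy :: "nat \<Rightarrow> (nat \<Rightarrow> ('a::comm_ring_1) laurent) \<Rightarrow> (nat \<Rightarrow> 'a laurent) \<Rightarrow> bool" where
  "trivial_syzygy n q f \<longleftrightarrow> (\<exists>c. (\<forall>i<n. \<forall>j<n. in_LR n (c i j)) \<and>
     (\<forall>k<n. f k = (\<Sum>i<n. \<Sum>j\<in>{..<n} - {i}. c i j * S_vec q i j k)))"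

end

theory Submission
  imports Defs
begin

text \<open>If the lowest x_m-coefficient of r_m is a monic monomial and r_0, ..., r_(m-1) do not
involve x_m, then r_m is a non-zero-divisor modulo (r_0, ..., r_(m-1)): if g r_m lies in that
ideal, so does the lowest x_m-homogeneous part of g (compare lowest parts and cancel the
monomial), and one descends on the number of x_m-degrees of g. Hence a flat sequence is
regular, and by the usual induction on the length of the sequence all its syzygies are Koszul
syzygies. An invertible matrix A carries syzygies of q to syzygies of qA and the Koszul syzygies
of qA back to Koszul syzygies of q.\<close>

lemma in_LR_zero [simp]: "in_LR n 0"
  by (simp add: in_LR_def)

lemma in_LR_uminus [simp]: "in_LR n (- p) = in_LR n p"
  by (simp add: in_LR_def)

lemma in_LR_add [intro]: "in_LR n p \<Longrightarrow> in_LR n q \<Longrightarrow> in_LR n (p + q)"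
  unfolding in_LR_def by (auto dest: subsetD[OF keys_add])

lemma in_LR_diff [intro]: "in_LR n p \<Longrightarrow> in_LR n q \<Longrightarrow> in_LR n (p - q)"
  unfolding in_LR_def by (auto dest: subsetD[OF keys_diff])

lemma in_LR_mult [intro]: "in_LR n p \<Longrightarrow> in_LR n q \<Longrightarrow> in_LR n (p * q)"
  unfolding in_LR_def by (fastforce dest!: subsetD[OF keys_mult] subsetD[OF keys_add])

lemma in_LR_sum [intro]: "(\<And>i. i \<in> I \<Longrightarrow> in_LR n (f i)) \<Longrightarrow> in_LR n (sum f I)"
  by (induction I rule: infinite_finite_induct) auto

lemma in_LR_single [intro]: "Poly_Mapping.keys e \<subseteq> {..<n} \<Longrightarrow> in_LR n (Poly_Mapping.single e c)"
  by (simp add: in_LR_def)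

lemma in_LR_mono: "in_LR m p \<Longrightarrow> m \<le> n \<Longrightarrow> in_LR n p"
  unfolding in_LR_def by (meson order.trans lessThan_subset_iff)

lemma in_LR_lookup_eq_0:
  "in_LR i p \<Longrightarrow> e \<in> Poly_Mapping.keys p \<Longrightarrow> i \<le> m \<Longrightarrow> Poly_Mapping.lookup e m = 0"
  unfolding in_LR_def by (force simp: in_keys_iff)

definition degree_part :: "nat \<Rightarrow> int \<Rightarrow> ('a::zero) laurent \<Rightarrow> 'a laurent" where
  "degree_part m k p =
     Abs_poly_mapping (\<lambda>e. if Poly_Mapping.lookup e m = k then Poly_Mapping.lookup p e else 0)"

lemma lookup_degree_part:
  "Poly_Mapping.lookup (degree_part m k p) e =
     (if Poly_Mapping.lookup e m = k then Poly_Mapping.lookup p e else 0)"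
proof -
  have "finite {e. (if Poly_Mapping.lookup e m = k then Poly_Mapping.lookup p e else 0) \<noteq> 0}"
    by (rule finite_subset[OF _ finite_lookup[of p]]) (auto split: if_splits)
  then show ?thesis
    unfolding degree_part_def by simp
qed

lemma keys_degree_part:
  "Poly_Mapping.keys (degree_part m k p) = {e \<in> Poly_Mapping.keys p. Poly_Mapping.lookup e m = k}"
  by (auto simp: in_keys_iff lookup_degree_part split: if_splits)

lemma keys_diff_degree_part:
  "e \<in> Poly_Mapping.keys (p - degree_part m k (p :: 'a::ab_group_add laurent)) \<Longrightarrow>
     e \<in> Poly_Mapping.keys p \<and> Poly_Mapping.lookup e m \<noteq> k"
  by (auto simp: in_keys_iff lookup_minus lookup_degree_part split: if_splits)

lemma degree_part_zero [simp]: "degree_part m k 0 = 0"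
  by (rule poly_mapping_eqI) (simp add: lookup_degree_part)

lemma degree_part_add:
  "degree_part m k (p + q) = degree_part m k p + degree_part m k (q :: 'a::monoid_add laurent)"
  by (rule poly_mapping_eqI) (simp add: lookup_degree_part lookup_add)

lemma degree_part_sum:
  "degree_part m k (sum f I) = (\<Sum>i\<in>I. degree_part m k (f i :: 'a::comm_monoid_add laurent))"
  by (induction I rule: infinite_finite_induct) (auto simp: degree_part_add)

lemma degree_part_id:
  "(\<And>e. e \<in> Poly_Mapping.keys p \<Longrightarrow> Poly_Mapping.lookup e m = k) \<Longrightarrow> degree_part m k p = p"
  by (rule poly_mapping_eqI) (auto simp: lookup_degree_part in_keys_iff)

lemma degree_part_eq_0:
  "(\<And>e. e \<in> Poly_Mapping.keys p \<Longrightarrow> Poly_Mapping.lookup e m \<noteq> k) \<Longrightarrow> degree_part m k p = 0"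
  by (rule poly_mapping_eqI) (auto simp: lookup_degree_part in_keys_iff)

lemma degree_part_mult_id:
  fixes p q :: "'a::comm_ring_1 laurent"
  assumes "\<And>a b. a \<in> Poly_Mapping.keys p \<Longrightarrow> b \<in> Poly_Mapping.keys q \<Longrightarrow>
      Poly_Mapping.lookup a m + Poly_Mapping.lookup b m = k"
  shows "degree_part m k (p * q) = p * q"
  by (rule degree_part_id) (auto dest!: subsetD[OF keys_mult] simp: lookup_add assms)

lemma degree_part_mult_eq_0:
  fixes p q :: "'a::comm_ring_1 laurent"
  assumes "\<And>a b. a \<in> Poly_Mapping.keys p \<Longrightarrow> b \<in> Poly_Mapping.keys q \<Longrightarrow>
      Poly_Mapping.lookup a m + Poly_Mapping.lookup b m \<noteq> k"
  shows "degree_part m k (p * q) = 0"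
  by (rule degree_part_eq_0) (auto dest!: subsetD[OF keys_mult] assms simp: lookup_add)

lemma in_LR_degree_part: "in_LR n p \<Longrightarrow> in_LR n (degree_part m k p)"
  unfolding in_LR_def keys_degree_part by auto

lemma degree_part_mult_const:
  fixes h r :: "'a::comm_ring_1 laurent"
  assumes "\<And>e. e \<in> Poly_Mapping.keys r \<Longrightarrow> Poly_Mapping.lookup e m = 0"
  shows "degree_part m k (h * r) = degree_part m k h * r"
proof -
  define h' where "h' = h - degree_part m k h"
  have "degree_part m k (degree_part m k h * r) = degree_part m k h * r"
    by (rule degree_part_mult_id) (simp add: keys_degree_part assms)
  moreover have "degree_part m k (h' * r) = 0"
    unfolding h'_def by (rule degree_part_mult_eq_0) (auto simp: assms dest!: keys_diff_degree_part)
  moreover have "h * r = degree_part m k h * r + h' * r"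
    by (simp add: h'_def algebra_simps)
  ultimately show ?thesis
    by (simp add: degree_part_add)
qed

lemma degree_part_mult_lowest:
  fixes g r :: "'a::comm_ring_1 laurent"
  assumes g: "\<And>e. e \<in> Poly_Mapping.keys g \<Longrightarrow> k \<le> Poly_Mapping.lookup e m"
    and r: "\<And>e. e \<in> Poly_Mapping.keys r \<Longrightarrow> d \<le> Poly_Mapping.lookup e m"
  shows "degree_part m (k + d) (g * r) = degree_part m k g * degree_part m d r"
proof -
  define g' where "g' = g - degree_part m k g"
  define r' where "r' = r - degree_part m d r"
  have g': "\<And>e. e \<in> Poly_Mapping.keys g' \<Longrightarrow> k < Poly_Mapping.lookup e m"
    using g unfolding g'_def by (force dest: keys_diff_degree_part)
  have r': "\<And>e. e \<in> Poly_Mapping.keys r' \<Longrightarrow> d < Poly_Mapping.lookup e m"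
    using r unfolding r'_def by (force dest: keys_diff_degree_part)
  have "degree_part m (k + d) (degree_part m k g * degree_part m d r) =
      degree_part m k g * degree_part m d r"
    by (rule degree_part_mult_id) (simp add: keys_degree_part)
  moreover have "degree_part m (k + d) (degree_part m k g * r') = 0"
    by (rule degree_part_mult_eq_0) (fastforce simp: keys_degree_part dest: r')
  moreover have "degree_part m (k + d) (g' * degree_part m d r) = 0"
    by (rule degree_part_mult_eq_0) (fastforce simp: keys_degree_part dest: g')
  moreover have "degree_part m (k + d) (g' * r') = 0"
    by (rule degree_part_mult_eq_0) (fastforce dest: g' r')
  moreover have "g * r = degree_part m k g * degree_part m d r
      + (degree_part m k g * r' + g' * degree_part m d r + g' * r')"
    by (simp add: g'_def r'_def algebra_simps)
  ultimately show ?thesis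
    by (simp only: degree_part_add add_0_right)
qed

lemma lookup_coeff_slice:
  "Poly_Mapping.lookup (coeff_slice p j k) e =
     (if Poly_Mapping.lookup e j = 0 then Poly_Mapping.lookup p (e + Poly_Mapping.single j k) else 0)"
proof -
  have "{e. (if Poly_Mapping.lookup e j = 0 then Poly_Mapping.lookup p (e + Poly_Mapping.single j k)
      else 0) \<noteq> 0} \<subseteq> (\<lambda>x. x - Poly_Mapping.single j k) ` Poly_Mapping.keys p"
    by (auto split: if_splits intro!: rev_image_eqI[of "_ + Poly_Mapping.single j k"] simp: in_keys_iff)
  then have "finite {e. (if Poly_Mapping.lookup e j = 0
      then Poly_Mapping.lookup p (e + Poly_Mapping.single j k) else 0) \<noteq> 0}"
    by (rule finite_subset) simp
  then show ?thesis
    unfolding coeff_slice_def by simp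
qed

lemma low_deg_le: "e \<in> Poly_Mapping.keys p \<Longrightarrow> low_deg p j \<le> Poly_Mapping.lookup e j"
  unfolding low_deg_def by (rule Min_le) auto

lemma divisor_wrt_lowest_part:
  assumes "divisor_wrt m p"
  obtains a where "Poly_Mapping.keys a \<subseteq> {..<Suc m}"
    "degree_part m (low_deg p m) p = Poly_Mapping.single a 1"
proof -
  define d where "d = low_deg p m"
  obtain e0 where e0: "Poly_Mapping.keys e0 \<subseteq> {..<m}" "coeff_slice p m d = Poly_Mapping.single e0 1"
    using assms unfolding divisor_wrt_def d_def by blast
  define a where "a = e0 + Poly_Mapping.single m d"
  have e0m: "Poly_Mapping.lookup e0 m = 0"
    using e0(1) by (auto simp: in_keys_iff)
  have "Poly_Mapping.keys a \<subseteq> {..<Suc m}"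
    using e0(1) keys_add[of e0 "Poly_Mapping.single m d"] unfolding a_def by (auto split: if_splits)
  moreover have "degree_part m d p = Poly_Mapping.single a 1"
  proof (rule poly_mapping_eqI)
    fix e
    show "Poly_Mapping.lookup (degree_part m d p) e = Poly_Mapping.lookup (Poly_Mapping.single a 1) e"
    proof (cases "Poly_Mapping.lookup e m = d")
      case True
      define e' where "e' = e - Poly_Mapping.single m d"
      have e': "Poly_Mapping.lookup e' m = 0" "e = e' + Poly_Mapping.single m d"
        by (simp_all add: e'_def lookup_minus True)
      have "Poly_Mapping.lookup (degree_part m d p) e = Poly_Mapping.lookup (coeff_slice p m d) e'"
        by (simp add: lookup_degree_part True lookup_coeff_slice e'(1) flip: e'(2))
      also have "\<dots> = (if a = e then 1 else 0)"
        by (auto simp: e0(2) lookup_single a_def e'(2))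
      finally show ?thesis
        by (simp add: lookup_single)
    next
      case False
      then have "a \<noteq> e"
        by (auto simp: a_def lookup_add e0m)
      with False show ?thesis
        by (simp add: lookup_degree_part lookup_single)
    qed
  qed
  ultimately show ?thesis
    using that unfolding d_def by blast
qed

lemma flatness_in_LR: "flatness n r \<Longrightarrow> j < n \<Longrightarrow> in_LR n (r j)"
  unfolding flatness_def by (meson Suc_leI in_LR_mono)

lemma flatness_lookup_eq_0:
  "flatness n r \<Longrightarrow> j < m \<Longrightarrow> m < n \<Longrightarrow> e \<in> Poly_Mapping.keys (r j) \<Longrightarrow>
     Poly_Mapping.lookup e m = 0"
  using in_LR_lookup_eq_0[of "Suc j" "r j" e m] by (auto simp: flatness_def)

definition in_ideal :: "nat \<Rightarrow> (nat \<Rightarrow> ('a::comm_ring_1) laurent) \<Rightarrow> nat \<Rightarrow> 'a laurent \<Rightarrow> bool" where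
  "in_ideal n r m p \<longleftrightarrow> (\<exists>h. (\<forall>j<m. in_LR n (h j)) \<and> p = (\<Sum>j<m. h j * r j))"

lemma in_ideal_zero: "in_ideal n r m 0"
  unfolding in_ideal_def by (intro exI[of _ "\<lambda>_. 0"]) simp

lemma in_ideal_add:
  assumes "in_ideal n r m p" "in_ideal n r m q"
  shows "in_ideal n r m (p + q)"
proof -
  obtain h h' where "\<forall>j<m. in_LR n (h j)" "p = (\<Sum>j<m. h j * r j)"
    "\<forall>j<m. in_LR n (h' j)" "q = (\<Sum>j<m. h' j * r j)"
    using assms unfolding in_ideal_def by blast
  then show ?thesis
    unfolding in_ideal_def by (intro exI[of _ "\<lambda>j. h j + h' j"]) (auto simp: distrib_right sum.distrib)
qed

lemma in_ideal_mult:
  assumes "in_ideal n r m p" "in_LR n c"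
  shows "in_ideal n r m (c * p)"
proof -
  obtain h where "\<forall>j<m. in_LR n (h j)" "p = (\<Sum>j<m. h j * r j)"
    using assms(1) unfolding in_ideal_def by blast
  then show ?thesis
    unfolding in_ideal_def using assms(2)
    by (intro exI[of _ "\<lambda>j. c * h j"]) (auto simp: sum_distrib_left mult.assoc)
qed

lemma in_ideal_uminus:
  assumes "in_ideal n r m p"
  shows "in_ideal n r m (- p)"
proof -
  obtain h where "\<forall>j<m. in_LR n (h j)" "p = (\<Sum>j<m. h j * r j)"
    using assms unfolding in_ideal_def by blast
  then show ?thesis
    unfolding in_ideal_def by (intro exI[of _ "\<lambda>j. - h j"]) (simp add: sum_negf)
qed

lemma in_ideal_diff: "in_ideal n r m p \<Longrightarrow> in_ideal n r m q \<Longrightarrow> in_ideal n r m (p - q)"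
  using in_ideal_add[OF _ in_ideal_uminus, of n r m p q] by simp

lemma in_ideal_degree_part:
  assumes "\<And>j e. j < m \<Longrightarrow> e \<in> Poly_Mapping.keys (r j) \<Longrightarrow> Poly_Mapping.lookup e m = 0"
    and "in_ideal n r m p"
  shows "in_ideal n r m (degree_part m k p)"
proof -
  obtain h where h: "\<forall>j<m. in_LR n (h j)" "p = (\<Sum>j<m. h j * r j)"
    using assms(2) unfolding in_ideal_def by blast
  have "degree_part m k p = (\<Sum>j<m. degree_part m k (h j) * r j)"
    unfolding h(2) degree_part_sum by (rule sum.cong) (simp_all add: degree_part_mult_const assms(1))
  then show ?thesis
    unfolding in_ideal_def using h(1)
    by (intro exI[of _ "\<lambda>j. degree_part m k (h j)"]) (auto intro: in_LR_degree_part)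
qed

lemma flatness_lowest_part_in_ideal:
  fixes r :: "nat \<Rightarrow> 'a::comm_ring_1 laurent"
  assumes fl: "flatness n r" and mn: "m < n"
    and g: "\<And>e. e \<in> Poly_Mapping.keys g \<Longrightarrow> k \<le> Poly_Mapping.lookup e m"
    and gr: "in_ideal n r m (g * r m)"
  shows "in_ideal n r m (degree_part m k g)"
proof -
  define d where "d = low_deg (r m) m"
  obtain a where a: "Poly_Mapping.keys a \<subseteq> {..<Suc m}" "degree_part m d (r m) = Poly_Mapping.single a 1"
    using divisor_wrt_lowest_part fl mn unfolding flatness_def d_def by blast
  have "in_ideal n r m (degree_part m (k + d) (g * r m))"
    using flatness_lookup_eq_0[OF fl _ mn] gr by (rule in_ideal_degree_part)
  moreover have "degree_part m (k + d) (g * r m) = degree_part m k g * degree_part m d (r m)"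
    unfolding d_def by (rule degree_part_mult_lowest[OF g low_deg_le])
  ultimately have "in_ideal n r m (degree_part m k g * Poly_Mapping.single a 1)"
    using a(2) by simp
  moreover have "in_LR n (Poly_Mapping.single (- a) 1)"
    using a(1) mn by (intro in_LR_single) auto
  ultimately have
    "in_ideal n r m (Poly_Mapping.single (- a) 1 * (degree_part m k g * Poly_Mapping.single a 1))"
    by (rule in_ideal_mult)
  also have "Poly_Mapping.single (- a) 1 * (degree_part m k g * Poly_Mapping.single a 1) =
      degree_part m k g * (Poly_Mapping.single (- a) 1 * Poly_Mapping.single a (1::'a))"
    by (simp only: mult_ac)
  also have "\<dots> = degree_part m k g"
    by (simp add: mult_single)
  finally show ?thesis .
qed

lemma flatness_regular:
  fixes r :: "nat \<Rightarrow> 'a::comm_ring_1 laurent"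
  assumes fl: "flatness n r" and mn: "m < n"
  shows "in_LR n g \<Longrightarrow> in_ideal n r m (g * r m) \<Longrightarrow> in_ideal n r m g"
proof (induction "card ((\<lambda>e. Poly_Mapping.lookup e m) ` Poly_Mapping.keys g)" arbitrary: g
    rule: less_induct)
  case less
  show ?case
  proof (cases "g = 0")
    case True
    then show ?thesis
      by (simp add: in_ideal_zero)
  next
    case False
    define D where "D = (\<lambda>e. Poly_Mapping.lookup e m) ` Poly_Mapping.keys g"
    define k where "k = Min D"
    have D: "finite D" "k \<in> D"
      using False by (simp_all add: D_def k_def)
    have "\<And>e. e \<in> Poly_Mapping.keys g \<Longrightarrow> k \<le> Poly_Mapping.lookup e m"
      by (simp add: D_def k_def)
    then have low: "in_ideal n r m (degree_part m k g)"
      using flatness_lowest_part_in_ideal[OF fl mn] less.prems(2) by blast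
    define g' where "g' = g - degree_part m k g"
    have "in_LR n g'"
      unfolding g'_def using less.prems(1) by (simp add: in_LR_diff in_LR_degree_part)
    moreover have "in_ideal n r m (g' * r m)"
      unfolding g'_def left_diff_distrib using low flatness_in_LR[OF fl mn]
      by (metis in_ideal_diff in_ideal_mult less.prems(2) mult.commute)
    moreover have "(\<lambda>e. Poly_Mapping.lookup e m) ` Poly_Mapping.keys g' \<subseteq> D - {k}"
      unfolding D_def g'_def by (auto dest: keys_diff_degree_part)
    then have "card ((\<lambda>e. Poly_Mapping.lookup e m) ` Poly_Mapping.keys g') < card D"
      using D by (meson card_mono card_Diff1_less finite_Diff le_less_trans)
    ultimately have "in_ideal n r m g'"
      using less.hyps unfolding D_def by blast
    then show ?thesis
      using in_ideal_add[OF _ low, of g'] unfolding g'_def by simp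
  qed
qed

text \<open>The k-th entry of (C - C^T) q: the combinations of the vectors S_ij are exactly these.\<close>

definition koszul_comb ::
  "nat \<Rightarrow> (nat \<Rightarrow> 'a::comm_ring_1) \<Rightarrow> (nat \<Rightarrow> nat \<Rightarrow> 'a) \<Rightarrow> nat \<Rightarrow> 'a" where
  "koszul_comb n q c k = (\<Sum>j<n. (c k j - c j k) * q j)"

lemma koszul_comb_eq_sum_S_vec:
  assumes "k < n"
  shows "koszul_comb n q c k = (\<Sum>i<n. \<Sum>j\<in>{..<n} - {i}. c i j * S_vec q i j k)"
proof -
  have "(\<Sum>i<n. \<Sum>j\<in>{..<n} - {i}. c i j * S_vec q i j k)
      = (\<Sum>i<n. \<Sum>j\<in>{..<n} - {i}. (if i = k then c k j * q j else 0) - (if j = k then c i k * q i else 0))"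
    by (intro sum.cong refl) (auto simp: S_vec_def)
  also have "\<dots> = (\<Sum>j\<in>{..<n} - {k}. c k j * q j) - (\<Sum>i\<in>{..<n} - {k}. c i k * q i)"
  proof -
    have "(\<Sum>i<n. \<Sum>j\<in>{..<n} - {i}. if i = k then c k j * q j else 0)
        = (\<Sum>i<n. if i = k then \<Sum>j\<in>{..<n} - {k}. c k j * q j else 0)"
      by (intro sum.cong) auto
    moreover have "(\<Sum>i<n. \<Sum>j\<in>{..<n} - {i}. if j = k then c i k * q i else 0)
        = (\<Sum>i\<in>{..<n} - {k}. c i k * q i)"
      using assms by (simp add: sum.If_cases Diff_eq Collect_neg_eq Int_commute)
    ultimately show ?thesis
      using assms by (simp add: sum_subtractf)
  qed
  also have "\<dots> = koszul_comb n q c k"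
    unfolding koszul_comb_def using assms
    by (simp add: sum_diff1 sum_subtractf left_diff_distrib)
  finally show ?thesis ..
qed

lemma koszul_comb_add_row:
  assumes "m < n"
  shows "koszul_comb n r (\<lambda>i j. c i j + (if i = m \<and> j < m then g j else 0)) k =
    koszul_comb n r c k + (if k = m then \<Sum>j<m. g j * r j else 0) - (if k < m then g k * r m else 0)"
proof -
  have "koszul_comb n r (\<lambda>i j. c i j + (if i = m \<and> j < m then g j else 0)) k =
    koszul_comb n r c k + (\<Sum>j<n. if k = m \<and> j < m then g j * r j else 0)
      - (\<Sum>j<n. if j = m \<and> k < m then g k * r m else 0)"
    unfolding koszul_comb_def sum_subtractf[symmetric] sum.distrib[symmetric]
    by (rule sum.cong) (auto simp: algebra_simps)
  moreover have "(\<Sum>j<n. if k = m \<and> j < m then g j * r j else 0) = (if k = m then \<Sum>j<m. g j * r j else 0)"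
  proof -
    have "{..<n} \<inter> {j. j < m} = {..<m}"
      using assms by auto
    then show ?thesis
      by (simp add: sum.If_cases)
  qed
  ultimately show ?thesis
    using assms by simp
qed

lemma flatness_syzygy_koszul:
  fixes r :: "nat \<Rightarrow> 'a::comm_ring_1 laurent"
  assumes fl: "flatness n r"
  shows "m \<le> n \<Longrightarrow> \<forall>i<m. in_LR n (f i) \<Longrightarrow> (\<Sum>i<m. f i * r i) = 0 \<Longrightarrow>
    \<exists>c. (\<forall>i j. in_LR n (c i j)) \<and> (\<forall>i j. m \<le> i \<or> m \<le> j \<longrightarrow> c i j = 0) \<and>
        (\<forall>k<m. f k = koszul_comb n r c k)"
proof (induction m arbitrary: f)
  case 0
  show ?case
    by (intro exI[of _ "\<lambda>_ _. 0"]) simp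
next
  case (Suc m)
  then have mn: "m < n"
    by simp
  have "f m * r m = (\<Sum>i<m. (- f i) * r i)"
    using Suc.prems(3) by (simp add: sum_negf add_eq_0_iff2)
  then have "in_ideal n r m (f m * r m)"
    unfolding in_ideal_def using Suc.prems(2) by (intro exI[of _ "\<lambda>i. - f i"]) simp
  then obtain g where g: "\<forall>j<m. in_LR n (g j)" "f m = (\<Sum>j<m. g j * r j)"
    using flatness_regular[OF fl mn] Suc.prems(2) unfolding in_ideal_def by blast
  define f' where "f' k = f k + g k * r m" for k
  have "\<forall>i<m. in_LR n (f' i)"
    unfolding f'_def using Suc.prems(2) g(1) flatness_in_LR[OF fl mn]
    by (simp add: in_LR_add in_LR_mult)
  moreover have "(\<Sum>i<m. f' i * r i) = (\<Sum>i<m. f i * r i) + r m * (\<Sum>i<m. g i * r i)"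
    unfolding f'_def sum_distrib_left sum.distrib[symmetric]
    by (rule sum.cong) (simp_all add: algebra_simps)
  then have "(\<Sum>i<m. f' i * r i) = (\<Sum>i<Suc m. f i * r i)"
    using g(2) by (simp add: mult.commute)
  ultimately obtain c where c: "\<forall>i j. in_LR n (c i j)" "\<forall>i j. m \<le> i \<or> m \<le> j \<longrightarrow> c i j = 0"
    "\<forall>k<m. f' k = koszul_comb n r c k"
    using Suc.IH[of f'] Suc.prems by auto
  have "koszul_comb n r c m = 0"
    unfolding koszul_comb_def using c(2) by simp
  then have "f k = koszul_comb n r (\<lambda>i j. c i j + (if i = m \<and> j < m then g j else 0)) k"
    if "k < Suc m" for k
    using that c(3) g(2) unfolding koszul_comb_add_row[OF mn] f'_def
    by (cases "k = m") (auto simp: eq_diff_eq less_Suc_eq)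
  then show ?case
    using c g(1) by (intro exI[of _ "\<lambda>i j. c i j + (if i = m \<and> j < m then g j else 0)"]) auto
qed

lemma koszul_comb_change_of_basis:
  "(\<Sum>j<n. A k j * koszul_comb n (vec_mat n q A) c j) =
     koszul_comb n q (\<lambda>u v. \<Sum>a<n. \<Sum>b<n. A u a * c a b * A v b) k"
proof -
  have "(\<Sum>j<n. A k j * koszul_comb n (vec_mat n q A) c j) =
      (\<Sum>i<n. (\<Sum>a<n. \<Sum>b<n. A k a * (c a b - c b a) * A i b) * q i)"
    unfolding koszul_comb_def vec_mat_def sum_distrib_left sum_distrib_right
    by (subst (2) sum.swap, subst sum.swap, subst (2) sum.swap)
      (simp add: mult_ac, rule sum.cong[OF refl], rule sum.swap)
  also have "\<dots> = koszul_comb n q (\<lambda>u v. \<Sum>a<n. \<Sum>b<n. A u a * c a b * A v b) k"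
    unfolding koszul_comb_def
  proof (rule sum.cong[OF refl])
    fix i
    have "(\<Sum>a<n. \<Sum>b<n. A i a * c a b * A k b) = (\<Sum>a<n. \<Sum>b<n. A k a * c b a * A i b)"
      by (subst sum.swap) (simp add: mult_ac)
    then show "(\<Sum>a<n. \<Sum>b<n. A k a * (c a b - c b a) * A i b) * q i =
      ((\<Sum>a<n. \<Sum>b<n. A k a * c a b * A i b) - (\<Sum>a<n. \<Sum>b<n. A i a * c a b * A k b)) * q i"
      by (simp add: algebra_simps sum_subtractf)
  qed
  finally show ?thesis .
qed

lemma sum_mult_inverse_apply:
  fixes A B :: "nat \<Rightarrow> nat \<Rightarrow> 'a::comm_ring_1"
  assumes AB: "\<forall>i<n. \<forall>j<n. (\<Sum>k<n. A i k * B k j) = (if i = j then 1 else 0)" and i: "i < n"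
  shows "(\<Sum>j<n. A i j * (\<Sum>l<n. B j l * f l)) = f i"
proof -
  have "(\<Sum>j<n. A i j * (\<Sum>l<n. B j l * f l)) = (\<Sum>l<n. (\<Sum>j<n. A i j * B j l) * f l)"
    unfolding sum_distrib_left sum_distrib_right by (subst sum.swap) (simp add: mult_ac)
  also have "\<dots> = (\<Sum>l<n. if i = l then f l else 0)"
    by (rule sum.cong) (auto simp: AB i)
  also have "\<dots> = f i"
    using i by simp
  finally show ?thesis .
qed

lemma sum_mult_vec_mat_inverse:
  assumes AB: "\<forall>i<n. \<forall>j<n. (\<Sum>k<n. A i k * B k j) = (if i = j then 1 else 0)"
  shows "(\<Sum>j<n. (\<Sum>l<n. B j l * f l) * vec_mat n q A j) = (\<Sum>i<n. f i * q i)"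
proof -
  have "(\<Sum>j<n. (\<Sum>l<n. B j l * f l) * vec_mat n q A j) =
      (\<Sum>l<n. \<Sum>i<n. f l * q i * (\<Sum>j<n. A i j * B j l))"
    unfolding vec_mat_def sum_distrib_left sum_distrib_right
    by (subst sum.swap, subst (2) sum.swap) (simp add: mult_ac, rule sum.cong[OF refl], rule sum.swap)
  also have "\<dots> = (\<Sum>l<n. \<Sum>i<n. if i = l then f l * q l else 0)"
    by (intro sum.cong refl) (auto simp: AB)
  also have "\<dots> = (\<Sum>i<n. f i * q i)"
    by simp
  finally show ?thesis .
qed

text \<open>The argument works over any commutative ring.\<close>

theorem lemma2p10:
  fixes q :: "nat \<Rightarrow> ('a::comm_ring_1) laurent" and n :: nat
  assumes R_cyclic: "surj (of_int :: int \<Rightarrow> 'a)"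
    and R_nontrivial: "(1::'a) \<noteq> 0"
    and q_in: "\<forall>i<n. in_LR n (q i)"
    and gf: "gen_flatness n q"
    and syz: "syzygy n q f"
  shows "trivial_syzygy n q f"
proof -
  obtain A B where A: "\<forall>i<n. \<forall>j<n. in_LR n (A i j)" and B: "\<forall>i<n. \<forall>j<n. in_LR n (B i j)"
    and AB: "\<forall>i<n. \<forall>j<n. (\<Sum>k<n. A i k * B k j) = (if i = j then 1 else 0)"
    and fl: "flatness n (vec_mat n q A)"
    using gf unfolding gen_flatness_def is_GL_def by blast
  have f: "\<forall>i<n. in_LR n (f i)" "(\<Sum>i<n. f i * q i) = 0"
    using syz unfolding syzygy_def by auto
  define g where "g j = (\<Sum>l<n. B j l * f l)" for j
  have "\<forall>j<n. in_LR n (g j)"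
    unfolding g_def using B f(1) by (intro allI impI in_LR_sum in_LR_mult) auto
  moreover have "(\<Sum>j<n. g j * vec_mat n q A j) = 0"
    unfolding g_def sum_mult_vec_mat_inverse[OF AB] by (rule f(2))
  ultimately obtain c where c: "\<forall>i j. in_LR n (c i j)"
    "\<forall>k<n. g k = koszul_comb n (vec_mat n q A) c k"
    using flatness_syzygy_koszul[OF fl, of n g] by auto
  define c' where "c' u v = (\<Sum>a<n. \<Sum>b<n. A u a * c a b * A v b)" for u v
  have "f k = koszul_comb n q c' k" if "k < n" for k
    using sum_mult_inverse_apply[OF AB that, of f] c(2)
      koszul_comb_change_of_basis[where A = A and q = q and c = c]
    unfolding c'_def g_def by simp
  moreover have "\<forall>i<n. \<forall>j<n. in_LR n (c' i j)"
    unfolding c'_def using A c(1) by (intro allI impI in_LR_sum in_LR_mult) auto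
  ultimately show ?thesis
    unfolding trivial_syzygy_def by (auto simp: koszul_comb_eq_sum_S_vec)
qed

end
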